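(* Let $\mathbf{A}$ be an algebra and let $e$ be an idempotent unary term of $\mathbf{A}$. Then $e$ separates $\mathbf{A}$ if and only if both of the following hold: (1) every isomorphism between subalgebras of $\mathbf{A}$ whose restriction to $e(A)$ is the identity map is the identity on its domain; and (2) every congruence on a subalgebra of $\mathbf{A}$ whose restriction to $e(A)$ is the equality relation is itself the equality relation.
   Context: A unary term $e$ of an algebra $\mathbf{A}$ is idempotent if $\mathbf{A}\models e(e(x))=e(x)$. The set $e(A)$ is then called a neighborhood of $\mathbf{A}$. We say $e$ separates $\mathbf{A}$ (is separating for $\mathbf{A}$) if for all $a\neq b$ in $A$ there is a unary term $g$ of $\mathbf{A}$ with $e(g(a))\neq e(g(b))$. *)

theory Defs
  imports Main
begin

text \<open>An algebra of signature (type of operation symbols 'f, arity function ar)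
  is given by a carrier A and interpretations ops of the operation symbols,
  each operation of symbol f taking argument lists of length ar f.\<close>

definition is_algebra :: "('f \<Rightarrow> nat) \<Rightarrow> 'a set \<Rightarrow> ('f \<Rightarrow> 'a list \<Rightarrow> 'a) \<Rightarrow> bool" where
  "is_algebra ar A ops \<longleftrightarrow> A \<noteq> {} \<and>
     (\<forall>f xs. length xs = ar f \<and> set xs \<subseteq> A \<longrightarrow> ops f xs \<in> A)"

datatype 'f uterm = X | Op 'f "'f uterm list"

fun wf_uterm :: "('f \<Rightarrow> nat) \<Rightarrow> 'f uterm \<Rightarrow> bool" where
  "wf_uterm ar X = True"
| "wf_uterm ar (Op f ts) = (length ts = ar f \<and> (\<forall>t\<in>set ts. wf_uterm ar t))"

fun ueval :: "('f \<Rightarrow> 'a list \<Rightarrow> 'a) \<Rightarrow> 'f uterm \<Rightarrow> 'a \<Rightarrow> 'a" where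
  "ueval ops X x = x"
| "ueval ops (Op f ts) x = ops f (map (\<lambda>t. ueval ops t x) ts)"

definition idempotent_term :: "('f \<Rightarrow> nat) \<Rightarrow> 'a set \<Rightarrow> ('f \<Rightarrow> 'a list \<Rightarrow> 'a) \<Rightarrow> 'f uterm \<Rightarrow> bool" where
  "idempotent_term ar A ops e \<longleftrightarrow> wf_uterm ar e \<and>
     (\<forall>x\<in>A. ueval ops e (ueval ops e x) = ueval ops e x)"

definition separates :: "('f \<Rightarrow> nat) \<Rightarrow> 'a set \<Rightarrow> ('f \<Rightarrow> 'a list \<Rightarrow> 'a) \<Rightarrow> 'f uterm \<Rightarrow> bool" where
  "separates ar A ops e \<longleftrightarrow>
     (\<forall>a\<in>A. \<forall>b\<in>A. a \<noteq> b \<longrightarrow>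
        (\<exists>g. wf_uterm ar g \<and> ueval ops e (ueval ops g a) \<noteq> ueval ops e (ueval ops g b)))"

definition is_subalgebra :: "('f \<Rightarrow> nat) \<Rightarrow> 'a set \<Rightarrow> ('f \<Rightarrow> 'a list \<Rightarrow> 'a) \<Rightarrow> 'a set \<Rightarrow> bool" where
  "is_subalgebra ar A ops B \<longleftrightarrow> B \<subseteq> A \<and> B \<noteq> {} \<and>
     (\<forall>f xs. length xs = ar f \<and> set xs \<subseteq> B \<longrightarrow> ops f xs \<in> B)"

definition is_iso :: "('f \<Rightarrow> nat) \<Rightarrow> ('f \<Rightarrow> 'a list \<Rightarrow> 'a) \<Rightarrow> 'a set \<Rightarrow> 'a set \<Rightarrow> ('a \<Rightarrow> 'a) \<Rightarrow> bool" where
  "is_iso ar ops B C h \<longleftrightarrow> bij_betw h B C \<and>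
     (\<forall>f xs. length xs = ar f \<and> set xs \<subseteq> B \<longrightarrow> h (ops f xs) = ops f (map h xs))"

definition is_congruence :: "('f \<Rightarrow> nat) \<Rightarrow> ('f \<Rightarrow> 'a list \<Rightarrow> 'a) \<Rightarrow> 'a set \<Rightarrow> 'a rel \<Rightarrow> bool" where
  "is_congruence ar ops B \<theta> \<longleftrightarrow> equiv B \<theta> \<and>
     (\<forall>f xs ys. length xs = ar f \<and> length ys = ar f \<and> list_all2 (\<lambda>x y. (x, y) \<in> \<theta>) xs ys
        \<longrightarrow> (ops f xs, ops f ys) \<in> \<theta>)"

end

theory Submission
  imports Defs
begin

(*
  If e separates A and x, y are distinct, some unary term g gives e(g(x)) \<noteq> e(g(y)); the
  unary term e \<circ> g maps into the neighbourhood e(A), commutes with isomorphisms and respects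
  congruences, so an isomorphism or congruence that is trivial on the neighbourhood cannot move x
  to y or identify them.

  Conversely, let a, b be elements with e(g(a)) = e(g(b)) for every unary term g. On the
  subalgebra generated by b, the relation {(t(b), s(b)) | t(a) = s(a)} is reflexive, symmetric and
  compatible, so its transitive closure is a congruence. Each step preserves the value of e, so the
  congruence is trivial on e(A) and hence, by (2), is equality: every unary identity satisfied by a
  is satisfied by b, and by symmetry conversely. So t(a) \<mapsto> t(b) is an isomorphism between
  the subalgebras generated by a and b; it fixes e(A) because e(t(a)) = e(t(b)), so by (1) it is
  the identity and a = b.
*)

definition ops_closed :: "('f \<Rightarrow> nat) \<Rightarrow> ('f \<Rightarrow> 'a list \<Rightarrow> 'a) \<Rightarrow> 'a set \<Rightarrow> bool" where
  "ops_closed ar ops B \<longleftrightarrow> (\<forall>f xs. length xs = ar f \<and> set xs \<subseteq> B \<longrightarrow> ops f xs \<in> B)"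

definition preserves_ops :: "('f \<Rightarrow> nat) \<Rightarrow> ('f \<Rightarrow> 'a list \<Rightarrow> 'a) \<Rightarrow> 'a set \<Rightarrow> ('a \<Rightarrow> 'a) \<Rightarrow> bool" where
  "preserves_ops ar ops B h \<longleftrightarrow>
     (\<forall>f xs. length xs = ar f \<and> set xs \<subseteq> B \<longrightarrow> h (ops f xs) = ops f (map h xs))"

definition compatible :: "('f \<Rightarrow> nat) \<Rightarrow> ('f \<Rightarrow> 'a list \<Rightarrow> 'a) \<Rightarrow> 'a rel \<Rightarrow> bool" where
  "compatible ar ops \<theta> \<longleftrightarrow>
     (\<forall>f xs ys. length xs = ar f \<and> length ys = ar f \<and> list_all2 (\<lambda>x y. (x, y) \<in> \<theta>) xs ys
        \<longrightarrow> (ops f xs, ops f ys) \<in> \<theta>)"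

lemma is_algebra_ops_closed: "is_algebra ar A ops \<Longrightarrow> ops_closed ar ops A"
  by (simp add: is_algebra_def ops_closed_def)

lemma is_subalgebra_iff:
  "is_subalgebra ar A ops B \<longleftrightarrow> B \<subseteq> A \<and> B \<noteq> {} \<and> ops_closed ar ops B"
  by (simp add: is_subalgebra_def ops_closed_def)

lemma is_iso_iff: "is_iso ar ops B C h \<longleftrightarrow> bij_betw h B C \<and> preserves_ops ar ops B h"
  by (simp add: is_iso_def preserves_ops_def)

lemma is_congruence_iff_equiv_compatible:
  "is_congruence ar ops B \<theta> \<longleftrightarrow> equiv B \<theta> \<and> compatible ar ops \<theta>"
  by (simp add: is_congruence_def compatible_def)

lemma ueval_closed:
  assumes "ops_closed ar ops B" and "x \<in> B"
  shows "wf_uterm ar t \<Longrightarrow> ueval ops t x \<in> B"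
proof (induction t)
  case (Op f ts)
  then have "set (map (\<lambda>t. ueval ops t x) ts) \<subseteq> B" by auto
  with Op.prems show ?case
    using assms(1) by (simp add: ops_closed_def)
qed (simp add: assms(2))

lemma ueval_preserved:
  assumes closed: "ops_closed ar ops B" and h: "preserves_ops ar ops B h" and x: "x \<in> B"
  shows "wf_uterm ar t \<Longrightarrow> h (ueval ops t x) = ueval ops t (h x)"
proof (induction t)
  case (Op f ts)
  then have "set (map (\<lambda>t. ueval ops t x) ts) \<subseteq> B"
    using ueval_closed[OF closed x] by auto
  with Op show ?case
    using h by (auto simp: preserves_ops_def comp_def cong: map_cong)
qed simp

lemma ueval_compatible:
  assumes "compatible ar ops \<theta>" and "(x, y) \<in> \<theta>"
  shows "wf_uterm ar t \<Longrightarrow> (ueval ops t x, ueval ops t y) \<in> \<theta>"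
proof (induction t)
  case (Op f ts)
  then have "list_all2 (\<lambda>x y. (x, y) \<in> \<theta>) (map (\<lambda>t. ueval ops t x) ts) (map (\<lambda>t. ueval ops t y) ts)"
    by (auto simp: list_all2_map1 list_all2_map2 list_all2_same)
  with Op.prems show ?case
    using assms(1) by (simp add: compatible_def)
qed (simp add: assms(2))

fun usubst :: "'f uterm \<Rightarrow> 'f uterm \<Rightarrow> 'f uterm" where
  "usubst s X = s"
| "usubst s (Op f ts) = Op f (map (usubst s) ts)"

lemma ueval_usubst: "ueval ops (usubst s t) x = ueval ops t (ueval ops s x)"
  by (induction t) (auto cong: map_cong)

lemma wf_uterm_usubst: "wf_uterm ar s \<Longrightarrow> wf_uterm ar t \<Longrightarrow> wf_uterm ar (usubst s t)"
  by (induction t) auto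

lemma idempotent_term_fixes_image:
  "idempotent_term ar A ops e \<Longrightarrow> x \<in> ueval ops e ` A \<Longrightarrow> ueval ops e x = x"
  by (auto simp: idempotent_term_def)

definition iso_rigid_over :: "('f \<Rightarrow> nat) \<Rightarrow> 'a set \<Rightarrow> ('f \<Rightarrow> 'a list \<Rightarrow> 'a) \<Rightarrow> 'a set \<Rightarrow> bool" where
  "iso_rigid_over ar A ops N \<longleftrightarrow>
     (\<forall>B C h. is_subalgebra ar A ops B \<and> is_subalgebra ar A ops C \<and> is_iso ar ops B C h
         \<and> (\<forall>x\<in>B \<inter> N. h x = x)
       \<longrightarrow> (\<forall>x\<in>B. h x = x))"

definition congruence_rigid_over :: "('f \<Rightarrow> nat) \<Rightarrow> 'a set \<Rightarrow> ('f \<Rightarrow> 'a list \<Rightarrow> 'a) \<Rightarrow> 'a set \<Rightarrow> bool" where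
  "congruence_rigid_over ar A ops N \<longleftrightarrow>
     (\<forall>B \<theta>. is_subalgebra ar A ops B \<and> is_congruence ar ops B \<theta>
         \<and> (\<forall>x\<in>B \<inter> N. \<forall>y\<in>B \<inter> N. (x, y) \<in> \<theta> \<longrightarrow> x = y)
       \<longrightarrow> \<theta> = Id_on B)"

definition unseparated :: "('f \<Rightarrow> nat) \<Rightarrow> ('f \<Rightarrow> 'a list \<Rightarrow> 'a) \<Rightarrow> 'f uterm \<Rightarrow> 'a \<Rightarrow> 'a \<Rightarrow> bool" where
  "unseparated ar ops e a b \<longleftrightarrow>
     (\<forall>g. wf_uterm ar g \<longrightarrow> ueval ops e (ueval ops g a) = ueval ops e (ueval ops g b))"

lemma separates_iff_unseparated_eq:
  "separates ar A ops e \<longleftrightarrow> (\<forall>a\<in>A. \<forall>b\<in>A. unseparated ar ops e a b \<longrightarrow> a = b)"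
  unfolding separates_def unseparated_def by blast

lemma unseparated_sym: "unseparated ar ops e a b \<Longrightarrow> unseparated ar ops e b a"
  by (simp add: unseparated_def)

lemma ueval_usubst_in_neighborhood:
  assumes "ops_closed ar ops B" and "B \<subseteq> A" and "x \<in> B"
    and "wf_uterm ar g" and "wf_uterm ar e"
  shows "ueval ops (usubst g e) x \<in> B \<inter> ueval ops e ` A"
proof
  show "ueval ops (usubst g e) x \<in> B"
    using ueval_closed[OF assms(1,3) wf_uterm_usubst[OF assms(4,5)]] .
  have "ueval ops g x \<in> A"
    using ueval_closed[OF assms(1,3,4)] assms(2) by blast
  then show "ueval ops (usubst g e) x \<in> ueval ops e ` A"
    by (simp add: ueval_usubst)
qed

lemma separates_imp_iso_rigid_over:
  assumes sep: "separates ar A ops e" and e: "wf_uterm ar e"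
  shows "iso_rigid_over ar A ops (ueval ops e ` A)"
  unfolding iso_rigid_over_def
proof (intro allI impI ballI)
  fix B C h x
  assume "is_subalgebra ar A ops B \<and> is_subalgebra ar A ops C \<and> is_iso ar ops B C h
    \<and> (\<forall>x\<in>B \<inter> ueval ops e ` A. h x = x)"
  then have sub: "is_subalgebra ar A ops B" "is_subalgebra ar A ops C"
    and iso: "is_iso ar ops B C h" and fixed: "\<forall>x\<in>B \<inter> ueval ops e ` A. h x = x"
    by blast+
  have B: "ops_closed ar ops B" "B \<subseteq> A"
    using sub(1) by (simp_all add: is_subalgebra_iff)
  have C: "h ` B \<subseteq> A"
    using iso sub(2) by (auto simp: is_iso_iff bij_betw_def is_subalgebra_iff)
  have h: "preserves_ops ar ops B h"
    using iso by (simp add: is_iso_iff)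
  assume x: "x \<in> B"
  have "unseparated ar ops e x (h x)"
    unfolding unseparated_def
  proof (intro allI impI)
    fix g assume g: "wf_uterm ar g"
    let ?p = "usubst g e"
    have "h (ueval ops ?p x) = ueval ops ?p x"
      using fixed ueval_usubst_in_neighborhood[OF B x g e] by blast
    then have "ueval ops ?p x = ueval ops ?p (h x)"
      using ueval_preserved[OF B(1) h x wf_uterm_usubst[OF g e]] by simp
    then show "ueval ops e (ueval ops g x) = ueval ops e (ueval ops g (h x))"
      by (simp add: ueval_usubst)
  qed
  moreover have "x \<in> A" and "h x \<in> A" using x B(2) C by auto
  ultimately show "h x = x"
    using sep unfolding separates_iff_unseparated_eq by (metis (no_types))
qed

lemma separates_imp_congruence_rigid_over:
  assumes sep: "separates ar A ops e" and e: "wf_uterm ar e"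
  shows "congruence_rigid_over ar A ops (ueval ops e ` A)"
  unfolding congruence_rigid_over_def
proof (intro allI impI)
  fix B \<theta>
  assume "is_subalgebra ar A ops B \<and> is_congruence ar ops B \<theta>
    \<and> (\<forall>x\<in>B \<inter> ueval ops e ` A. \<forall>y\<in>B \<inter> ueval ops e ` A. (x, y) \<in> \<theta> \<longrightarrow> x = y)"
  then have sub: "is_subalgebra ar A ops B" and cong: "is_congruence ar ops B \<theta>"
    and trivial: "\<forall>x\<in>B \<inter> ueval ops e ` A. \<forall>y\<in>B \<inter> ueval ops e ` A. (x, y) \<in> \<theta> \<longrightarrow> x = y"
    by blast+
  have B: "ops_closed ar ops B" "B \<subseteq> A"
    using sub by (simp_all add: is_subalgebra_iff)
  have equiv: "equiv B \<theta>" and compat: "compatible ar ops \<theta>"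
    using cong by (simp_all add: is_congruence_iff_equiv_compatible)
  have "x = y" if xy: "(x, y) \<in> \<theta>" for x y
  proof -
    have x: "x \<in> B" and y: "y \<in> B" using xy equiv by (auto simp: equiv_def)
    have "unseparated ar ops e x y"
      unfolding unseparated_def
    proof (intro allI impI)
      fix g assume g: "wf_uterm ar g"
      let ?p = "usubst g e"
      have "(ueval ops ?p x, ueval ops ?p y) \<in> \<theta>"
        using ueval_compatible[OF compat xy wf_uterm_usubst[OF g e]] .
      then have "ueval ops ?p x = ueval ops ?p y"
        using trivial ueval_usubst_in_neighborhood[OF B x g e] ueval_usubst_in_neighborhood[OF B y g e]
        by blast
      then show "ueval ops e (ueval ops g x) = ueval ops e (ueval ops g y)"
        by (simp add: ueval_usubst)
    qed
    moreover have "x \<in> A" and "y \<in> A" using x y B(2) by auto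
    ultimately show "x = y"
      using sep unfolding separates_iff_unseparated_eq by blast
  qed
  then have "\<theta> \<subseteq> Id" by auto
  with equiv show "\<theta> = Id_on B"
    unfolding equiv_def refl_on_def by auto
qed

definition subalg_gen :: "('f \<Rightarrow> nat) \<Rightarrow> ('f \<Rightarrow> 'a list \<Rightarrow> 'a) \<Rightarrow> 'a \<Rightarrow> 'a set" where
  "subalg_gen ar ops a = (\<lambda>t. ueval ops t a) ` {t. wf_uterm ar t}"

lemma ueval_in_subalg_gen: "wf_uterm ar t \<Longrightarrow> ueval ops t a \<in> subalg_gen ar ops a"
  by (simp add: subalg_gen_def)

lemma generator_in_subalg_gen: "a \<in> subalg_gen ar ops a"
  using ueval_in_subalg_gen[of ar X] by simp

lemma lists_in_subalg_gen:
  assumes "set xs \<subseteq> subalg_gen ar ops a"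
  obtains ts where "\<forall>t\<in>set ts. wf_uterm ar t" and "xs = map (\<lambda>t. ueval ops t a) ts"
proof -
  have "xs \<in> lists ((\<lambda>t. ueval ops t a) ` {t. wf_uterm ar t})"
    using assms by (simp add: subalg_gen_def in_lists_conv_set subset_iff)
  then obtain ts where "ts \<in> lists {t. wf_uterm ar t}" and "xs = map (\<lambda>t. ueval ops t a) ts"
    by (auto simp: lists_image)
  then show ?thesis using that by (simp add: in_lists_conv_set)
qed

lemma ops_closed_subalg_gen: "ops_closed ar ops (subalg_gen ar ops a)"
  unfolding ops_closed_def
proof (intro allI impI, elim conjE)
  fix f xs
  assume len: "length xs = ar f" and sub: "set xs \<subseteq> subalg_gen ar ops a"
  obtain ts where "\<forall>t\<in>set ts. wf_uterm ar t" and "xs = map (\<lambda>t. ueval ops t a) ts"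
    using lists_in_subalg_gen[OF sub] .
  with len show "ops f xs \<in> subalg_gen ar ops a"
    using ueval_in_subalg_gen[of ar "Op f ts" ops a] by simp
qed

lemma is_subalgebra_subalg_gen:
  assumes "is_algebra ar A ops" and "a \<in> A"
  shows "is_subalgebra ar A ops (subalg_gen ar ops a)"
proof -
  have "subalg_gen ar ops a \<subseteq> A"
    using ueval_closed[OF is_algebra_ops_closed[OF assms(1)] assms(2)]
    by (auto simp: subalg_gen_def)
  then show ?thesis
    using generator_in_subalg_gen[of a ar ops] ops_closed_subalg_gen[of ar ops a]
    by (auto simp: is_subalgebra_iff)
qed

lemma trancl_compatible_fun:
  assumes R: "R \<subseteq> B \<times> B" "refl_on B R"
    and F: "\<And>xs ys. length xs = n \<Longrightarrow> list_all2 (\<lambda>x y. (x, y) \<in> R) xs ys \<Longrightarrow> (F xs, F ys) \<in> R"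
    and xy: "list_all2 (\<lambda>x y. (x, y) \<in> R\<^sup>+) xs ys" and n: "length xs = n"
  shows "(F xs, F ys) \<in> R\<^sup>+"
  using xy n F
  (* Change one argument at a time; reflexivity on B keeps the other arguments related. *)
proof (induction xs ys arbitrary: F n rule: list_all2_induct)
  case Nil
  then show ?case by (simp add: r_into_trancl)
next
  case (Cons x xs y ys)
  have RB: "R\<^sup>+ \<subseteq> B \<times> B" using R(1) by (rule trancl_subset_Sigma)
  have x: "x \<in> B" using Cons.hyps(1) RB by auto
  have ys: "set ys \<subseteq> B" using Cons.hyps(2) RB by (induction rule: list_all2_induct) auto
  have head_step: "(F (u # ys), F (v # ys)) \<in> R" if "(u, v) \<in> R" for u v
    using Cons.prems that ys R(2) list_all2_lengthD[OF Cons.hyps(2)]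
    by (simp add: list_all2_same refl_on_def subset_iff)
  have "(F (x # xs), F (x # ys)) \<in> R\<^sup>+"
    using Cons.IH[of "length xs" "\<lambda>zs. F (x # zs)"] Cons.prems x R(2)
    by (simp add: refl_on_def)
  moreover have "(F (x # ys), F (y # ys)) \<in> R\<^sup>+"
    using Cons.hyps(1) by (induction rule: trancl_induct) (auto intro: trancl_into_trancl head_step)
  ultimately show ?case by (rule trancl_trans)
qed

lemma compatible_trancl:
  assumes "compatible ar ops R" and "R \<subseteq> B \<times> B" and "refl_on B R"
  shows "compatible ar ops (R\<^sup>+)"
  unfolding compatible_def
proof (intro allI impI, elim conjE)
  fix f xs ys
  assume len: "length xs = ar f" and rel: "list_all2 (\<lambda>x y. (x, y) \<in> R\<^sup>+) xs ys"
  have "(ops f us, ops f vs) \<in> R"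
    if "length us = ar f" and "list_all2 (\<lambda>x y. (x, y) \<in> R) us vs" for us vs
    using assms(1) that list_all2_lengthD[OF that(2)] unfolding compatible_def by auto
  then show "(ops f xs, ops f ys) \<in> R\<^sup>+"
    using trancl_compatible_fun[OF assms(2,3)] rel len by blast
qed

lemma is_congruence_trancl:
  assumes "compatible ar ops R" and "R \<subseteq> B \<times> B" and "refl_on B R" and "sym R"
  shows "is_congruence ar ops B (R\<^sup>+)"
  unfolding is_congruence_iff_equiv_compatible
proof
  show "equiv B (R\<^sup>+)"
    using trancl_subset_Sigma[OF assms(2)] assms(3) sym_trancl[OF assms(4)]
    by (intro equivI) (auto simp: refl_on_def)
  show "compatible ar ops (R\<^sup>+)"
    using assms(1-3) by (rule compatible_trancl)
qed

definition transported_kernel :: "('f \<Rightarrow> nat) \<Rightarrow> ('f \<Rightarrow> 'a list \<Rightarrow> 'a) \<Rightarrow> 'a \<Rightarrow> 'a \<Rightarrow> 'a rel" where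
  "transported_kernel ar ops a b =
     (\<lambda>(t, s). (ueval ops t b, ueval ops s b)) `
       {(t, s). wf_uterm ar t \<and> wf_uterm ar s \<and> ueval ops t a = ueval ops s a}"

lemma transported_kernel_subset:
  "transported_kernel ar ops a b \<subseteq> subalg_gen ar ops b \<times> subalg_gen ar ops b"
  by (auto simp: transported_kernel_def ueval_in_subalg_gen)

lemma refl_on_transported_kernel:
  "refl_on (subalg_gen ar ops b) (transported_kernel ar ops a b)"
  by (force simp: refl_on_def subalg_gen_def transported_kernel_def)

lemma sym_transported_kernel: "sym (transported_kernel ar ops a b)"
  by (force simp: sym_def transported_kernel_def)

lemma compatible_transported_kernel: "compatible ar ops (transported_kernel ar ops a b)"
  unfolding compatible_def
proof (intro allI impI, elim conjE)
  let ?Z = "{(t, s). wf_uterm ar t \<and> wf_uterm ar s \<and> ueval ops t a = ueval ops s a}"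
  let ?F = "\<lambda>(t, s). (ueval ops t b, ueval ops s b)"
  fix f xs ys
  assume len: "length xs = ar f" "length ys = ar f"
    and rel: "list_all2 (\<lambda>x y. (x, y) \<in> transported_kernel ar ops a b) xs ys"
  have "zip xs ys \<in> lists (?F ` ?Z)"
    using rel by (auto simp: list_all2_iff transported_kernel_def)
  then obtain zs where zs: "zs \<in> lists ?Z" and zip: "zip xs ys = map ?F zs"
    by (auto simp: lists_image)
  let ?ts = "map fst zs" and ?ss = "map snd zs"
  have args: "xs = map (\<lambda>t. ueval ops t b) ?ts" "ys = map (\<lambda>s. ueval ops s b) ?ss"
    using arg_cong[OF zip, of "map fst"] arg_cong[OF zip, of "map snd"] len
    by (auto simp: split_def)
  have "map (\<lambda>t. ueval ops t a) ?ts = map (\<lambda>s. ueval ops s a) ?ss"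
    using zs by (induction zs) auto
  then have "(Op f ?ts, Op f ?ss) \<in> ?Z"
    using zs len arg_cong[OF zip, of length] by (auto simp del: map_map)
  moreover have "(ops f xs, ops f ys) = ?F (Op f ?ts, Op f ?ss)"
    using args by (simp del: map_map)
  ultimately show "(ops f xs, ops f ys) \<in> transported_kernel ar ops a b"
    unfolding transported_kernel_def by blast
qed

lemma transported_kernel_ueval_eq:
  assumes "unseparated ar ops e a b"
    and "(x, y) \<in> transported_kernel ar ops a b"
  shows "ueval ops e x = ueval ops e y"
proof -
  obtain t s where "wf_uterm ar t" "wf_uterm ar s" "ueval ops t a = ueval ops s a"
    and "x = ueval ops t b" "y = ueval ops s b"
    using assms(2) by (auto simp: transported_kernel_def)
  with assms(1) show ?thesis unfolding unseparated_def by metis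
qed

lemma congruence_rigid_transfers_identities:
  assumes alg: "is_algebra ar A ops" and idem: "idempotent_term ar A ops e" and b: "b \<in> A"
    and rigid: "congruence_rigid_over ar A ops (ueval ops e ` A)"
    and same: "unseparated ar ops e a b"
    and t: "wf_uterm ar t" and s: "wf_uterm ar s" and ts: "ueval ops t a = ueval ops s a"
  shows "ueval ops t b = ueval ops s b"
proof -
  let ?B = "subalg_gen ar ops b" and ?K = "transported_kernel ar ops a b"
  have cong: "is_congruence ar ops ?B (?K\<^sup>+)"
    using compatible_transported_kernel transported_kernel_subset refl_on_transported_kernel
      sym_transported_kernel by (rule is_congruence_trancl)
  have e_eq: "ueval ops e x = ueval ops e y" if "(x, y) \<in> ?K\<^sup>+" for x y
    using that by (induction rule: trancl_induct) (auto dest: transported_kernel_ueval_eq[OF same])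
  have "\<forall>x\<in>?B \<inter> ueval ops e ` A. \<forall>y\<in>?B \<inter> ueval ops e ` A. (x, y) \<in> ?K\<^sup>+ \<longrightarrow> x = y"
    using e_eq idempotent_term_fixes_image[OF idem] by (metis IntD2)
  then have "?K\<^sup>+ = Id_on ?B"
    using rigid is_subalgebra_subalg_gen[OF alg b] cong unfolding congruence_rigid_over_def by blast
  moreover have "(ueval ops t b, ueval ops s b) \<in> ?K\<^sup>+"
    using t s ts by (force simp: transported_kernel_def)
  ultimately show ?thesis by auto
qed

definition transfer_map :: "('f \<Rightarrow> nat) \<Rightarrow> ('f \<Rightarrow> 'a list \<Rightarrow> 'a) \<Rightarrow> 'a \<Rightarrow> 'a \<Rightarrow> 'a \<Rightarrow> 'a" where
  "transfer_map ar ops a b x = ueval ops (SOME t. wf_uterm ar t \<and> x = ueval ops t a) b"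

lemma transfer_map_ueval:
  assumes transfer: "\<And>t s. wf_uterm ar t \<Longrightarrow> wf_uterm ar s \<Longrightarrow>
      ueval ops t a = ueval ops s a \<Longrightarrow> ueval ops t b = ueval ops s b"
    and t: "wf_uterm ar t"
  shows "transfer_map ar ops a b (ueval ops t a) = ueval ops t b"
proof -
  let ?t = "SOME s. wf_uterm ar s \<and> ueval ops t a = ueval ops s a"
  have "wf_uterm ar ?t \<and> ueval ops t a = ueval ops ?t a"
    using t
    by (rule someI[where P = "\<lambda>s. wf_uterm ar s \<and> ueval ops t a = ueval ops s a", OF conjI, OF _ refl])
  then have "ueval ops t b = ueval ops ?t b"
    using transfer[OF t] by blast
  then show ?thesis
    by (simp add: transfer_map_def)
qed

lemma is_iso_transfer_map:
  assumes transfer: "\<And>t s. wf_uterm ar t \<Longrightarrow> wf_uterm ar s \<Longrightarrow>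
      ueval ops t a = ueval ops s a \<longleftrightarrow> ueval ops t b = ueval ops s b"
  shows "is_iso ar ops (subalg_gen ar ops a) (subalg_gen ar ops b) (transfer_map ar ops a b)"
proof -
  let ?h = "transfer_map ar ops a b"
  have h: "?h (ueval ops t a) = ueval ops t b" if "wf_uterm ar t" for t
  proof (rule transfer_map_ueval[OF _ that])
    fix t s assume "wf_uterm ar t" "wf_uterm ar s" "ueval ops t a = ueval ops s a"
    then show "ueval ops t b = ueval ops s b" using transfer by blast
  qed
  have "inj_on ?h (subalg_gen ar ops a)"
  proof (rule inj_onI)
    fix x y assume "x \<in> subalg_gen ar ops a" "y \<in> subalg_gen ar ops a" "?h x = ?h y"
    then obtain t s where "wf_uterm ar t" "wf_uterm ar s" "x = ueval ops t a" "y = ueval ops s a"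
      and "ueval ops t b = ueval ops s b"
      using h unfolding subalg_gen_def by force
    then show "x = y" using transfer by blast
  qed
  moreover have "?h ` subalg_gen ar ops a = subalg_gen ar ops b"
    unfolding subalg_gen_def image_image using h by (intro image_cong) auto
  moreover have "preserves_ops ar ops (subalg_gen ar ops a) ?h"
    unfolding preserves_ops_def
  proof (intro allI impI, elim conjE)
    fix f xs
    assume len: "length xs = ar f" and sub: "set xs \<subseteq> subalg_gen ar ops a"
    obtain ts where ts: "\<forall>t\<in>set ts. wf_uterm ar t" and xs: "xs = map (\<lambda>t. ueval ops t a) ts"
      using lists_in_subalg_gen[OF sub] .
    have "?h (ops f xs) = ?h (ueval ops (Op f ts) a)" using xs by simp
    also have "\<dots> = ueval ops (Op f ts) b"
      by (rule h) (use len ts xs in simp)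
    also have "\<dots> = ops f (map ?h xs)" using h ts xs by (simp cong: map_cong)
    finally show "?h (ops f xs) = ops f (map ?h xs)" .
  qed
  ultimately show ?thesis by (simp add: is_iso_iff bij_betw_def)
qed

lemma transfer_map_fixes_neighborhood:
  assumes idem: "idempotent_term ar A ops e"
    and transfer: "\<And>t s. wf_uterm ar t \<Longrightarrow> wf_uterm ar s \<Longrightarrow>
      ueval ops t a = ueval ops s a \<Longrightarrow> ueval ops t b = ueval ops s b"
    and same: "unseparated ar ops e a b"
    and x: "x \<in> subalg_gen ar ops a \<inter> ueval ops e ` A"
  shows "transfer_map ar ops a b x = x"
proof -
  have e: "wf_uterm ar e" using idem by (simp add: idempotent_term_def)
  obtain t where t: "wf_uterm ar t" and x_eq: "x = ueval ops t a"
    using x by (auto simp: subalg_gen_def)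
  have fixed: "ueval ops e x = x"
    using x idempotent_term_fixes_image[OF idem] by blast
  have "transfer_map ar ops a b x = transfer_map ar ops a b (ueval ops (usubst t e) a)"
    using fixed x_eq by (simp add: ueval_usubst)
  also have "\<dots> = ueval ops (usubst t e) b"
    using transfer_map_ueval[OF transfer wf_uterm_usubst[OF t e]] .
  also have "\<dots> = ueval ops e (ueval ops t a)"
    using same t by (simp add: unseparated_def ueval_usubst)
  also have "\<dots> = x"
    using fixed x_eq by simp
  finally show ?thesis .
qed

lemma unseparated_eq_if_rigid:
  assumes alg: "is_algebra ar A ops" and idem: "idempotent_term ar A ops e"
    and iso_rigid: "iso_rigid_over ar A ops (ueval ops e ` A)"
    and cong_rigid: "congruence_rigid_over ar A ops (ueval ops e ` A)"
    and a: "a \<in> A" and b: "b \<in> A" and same: "unseparated ar ops e a b"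
  shows "a = b"
proof -
  have transfer: "ueval ops t a = ueval ops s a \<longleftrightarrow> ueval ops t b = ueval ops s b"
    if "wf_uterm ar t" and "wf_uterm ar s" for t s
    using congruence_rigid_transfers_identities[OF alg idem b cong_rigid same that]
      congruence_rigid_transfers_identities[OF alg idem a cong_rigid unseparated_sym[OF same] that]
    by blast
  then have transfer_ab: "\<And>t s. wf_uterm ar t \<Longrightarrow> wf_uterm ar s \<Longrightarrow>
      ueval ops t a = ueval ops s a \<Longrightarrow> ueval ops t b = ueval ops s b"
    by blast
  let ?h = "transfer_map ar ops a b"
  have "is_iso ar ops (subalg_gen ar ops a) (subalg_gen ar ops b) ?h"
    using transfer by (rule is_iso_transfer_map)
  moreover have "\<forall>x\<in>subalg_gen ar ops a \<inter> ueval ops e ` A. ?h x = x"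
    using transfer_map_fixes_neighborhood[OF idem transfer_ab same] by blast
  ultimately have "\<forall>x\<in>subalg_gen ar ops a. ?h x = x"
    using iso_rigid is_subalgebra_subalg_gen[OF alg a] is_subalgebra_subalg_gen[OF alg b]
    unfolding iso_rigid_over_def by blast
  then have "?h a = a"
    using generator_in_subalg_gen[of a ar ops] by blast
  moreover have "?h a = b"
    using transfer_map_ueval[OF transfer_ab, where t = X] by simp
  ultimately show "a = b" by simp
qed

lemma rigid_imp_separates:
  assumes "is_algebra ar A ops" and "idempotent_term ar A ops e"
    and "iso_rigid_over ar A ops (ueval ops e ` A)"
    and "congruence_rigid_over ar A ops (ueval ops e ` A)"
  shows "separates ar A ops e"
  using unseparated_eq_if_rigid[OF assms] unfolding separates_iff_unseparated_eq by blast

theorem lemma2p1: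
  fixes ar :: "'f \<Rightarrow> nat" and A :: "'a set" and ops :: "'f \<Rightarrow> 'a list \<Rightarrow> 'a"
    and e :: "'f uterm"
  assumes "is_algebra ar A ops"
    and "idempotent_term ar A ops e"
  shows "separates ar A ops e \<longleftrightarrow>
    ((\<forall>B C h. is_subalgebra ar A ops B \<and> is_subalgebra ar A ops C \<and> is_iso ar ops B C h
         \<and> (\<forall>x\<in>B \<inter> ueval ops e ` A. h x = x)
       \<longrightarrow> (\<forall>x\<in>B. h x = x)) \<and>
     (\<forall>B \<theta>. is_subalgebra ar A ops B \<and> is_congruence ar ops B \<theta>
         \<and> (\<forall>x\<in>B \<inter> ueval ops e ` A. \<forall>y\<in>B \<inter> ueval ops e ` A. (x, y) \<in> \<theta> \<longrightarrow> x = y)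
       \<longrightarrow> \<theta> = Id_on B))"
proof -
  have "wf_uterm ar e"
    using assms(2) by (simp add: idempotent_term_def)
  then have "separates ar A ops e \<longleftrightarrow>
      iso_rigid_over ar A ops (ueval ops e ` A) \<and> congruence_rigid_over ar A ops (ueval ops e ` A)"
    using separates_imp_iso_rigid_over separates_imp_congruence_rigid_over
      rigid_imp_separates[OF assms] by blast
  then show ?thesis
    unfolding iso_rigid_over_def congruence_rigid_over_def .
qed

end
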